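(* Let $\delta\ge0$ and edge weights $\omega_{jk}\in\mathbb{R}$ for $j\in[d\ell]$, $k\in[\ell]$. The optimal value of program $(P'')$ is at least the weight of the maximum weight $d$-to-$1$ matching in the complete bipartite graph between LHS-nodes $[d\ell]$ and RHS-nodes $[\ell]$ with weights $\omega$.
   Context: Program $(P'')$: maximize $\sum_{j,k}x_{jk}\omega_{jk}-\delta\sum_{j,k}(x_{jk}\log x_{jk}+y_{jk}\log y_{jk})$ subject to $\sum_j(x_{jk}+y_{jk})\le d$ for all $k\in[\ell]$, $\sum_k(x_{jk}+y_{jk})=1$ for all $j\in[d\ell]$, $x_{jk},y_{jk}\in[0,1]$ (with $0\log0=0$). A $d$-to-$1$ matching matches each LHS-node to at most one RHS-node and each RHS-node to at most $d$ LHS-nodes; its weight is the sum of weights of matched edges. *)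

theory Defs
  imports Complex_Main
begin

text \<open>Indices are 0-based: LHS-nodes j < d*l, RHS-nodes k < l.\<close>

definition xlogx :: "real \<Rightarrow> real" where
  "xlogx t = (if t = 0 then 0 else t * ln t)"

definition feasibleP :: "nat \<Rightarrow> nat \<Rightarrow> (nat \<Rightarrow> nat \<Rightarrow> real) \<Rightarrow> (nat \<Rightarrow> nat \<Rightarrow> real) \<Rightarrow> bool" where
  "feasibleP d l x y \<longleftrightarrow>
     (\<forall>k<l. (\<Sum>j<d*l. x j k + y j k) \<le> real d) \<and>
     (\<forall>j<d*l. (\<Sum>k<l. x j k + y j k) = 1) \<and>
     (\<forall>j<d*l. \<forall>k<l. 0 \<le> x j k \<and> x j k \<le> 1 \<and> 0 \<le> y j k \<and> y j k \<le> 1)"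

definition objP :: "nat \<Rightarrow> nat \<Rightarrow> real \<Rightarrow> (nat \<Rightarrow> nat \<Rightarrow> real) \<Rightarrow> (nat \<Rightarrow> nat \<Rightarrow> real) \<Rightarrow> (nat \<Rightarrow> nat \<Rightarrow> real) \<Rightarrow> real" where
  "objP d l \<delta> \<omega> x y =
     (\<Sum>j<d*l. \<Sum>k<l. x j k * \<omega> j k)
     - \<delta> * (\<Sum>j<d*l. \<Sum>k<l. xlogx (x j k) + xlogx (y j k))"

definition opt_val_P :: "nat \<Rightarrow> nat \<Rightarrow> real \<Rightarrow> (nat \<Rightarrow> nat \<Rightarrow> real) \<Rightarrow> real" where
  "opt_val_P d l \<delta> \<omega> = (SUP xy \<in> {(x, y). feasibleP d l x y}. objP d l \<delta> \<omega> (fst xy) (snd xy))"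

definition d_to_1_matching :: "nat \<Rightarrow> nat \<Rightarrow> (nat \<times> nat) set \<Rightarrow> bool" where
  "d_to_1_matching d l M \<longleftrightarrow>
     M \<subseteq> {..<d*l} \<times> {..<l} \<and>
     (\<forall>j. card {k. (j, k) \<in> M} \<le> 1) \<and>
     (\<forall>k. card {j. (j, k) \<in> M} \<le> d)"

definition matching_weight :: "(nat \<Rightarrow> nat \<Rightarrow> real) \<Rightarrow> (nat \<times> nat) set \<Rightarrow> real" where
  "matching_weight \<omega> M = (\<Sum>(j, k)\<in>M. \<omega> j k)"

definition max_matching_weight :: "nat \<Rightarrow> nat \<Rightarrow> (nat \<Rightarrow> nat \<Rightarrow> real) \<Rightarrow> real" where
  "max_matching_weight d l \<omega> = Max (matching_weight \<omega> ` {M. d_to_1_matching d l M})"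

end

theory Submission
  imports Defs
begin

text \<open>Put the indicator x of a maximum weight d-to-1 matching on the matched edges. Each
  LHS-node j still has mass a j = 1 - (sum over k of x j k) to place and each RHS-node k has
  capacity b k = d - (sum over j of x j k) left; both total to the same N, so the product
  y j k = a j * b k / N completes x to a feasible point of (P'') (if N = 0, every a j vanishes,
  so the junk value of division by zero is harmless). All entries lie in [0,1],
  where t log t \<le> 0, so the objective at (x, y) is at least the weight of the matching. Since
  t log t \<ge> t - 1, the objective is bounded above on the feasible set, so its supremum
  dominates this value.\<close>

lemma xlogx_nonpos: "0 \<le> t \<Longrightarrow> t \<le> 1 \<Longrightarrow> xlogx t \<le> 0"
  unfolding xlogx_def by (simp add: mult_nonneg_nonpos)

lemma diff_one_le_xlogx: "0 \<le> t \<Longrightarrow> t - 1 \<le> xlogx t"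
proof (cases "t = 0")
  case False
  assume "0 \<le> t"
  then have "t > 0" using False by simp
  have "- ln t \<le> 1 / t - 1"
    using ln_le_minus_one[of "1 / t"] \<open>t > 0\<close> by (simp add: ln_div)
  then have "t * - ln t \<le> t * (1 / t - 1)"
    using \<open>t > 0\<close> by (intro mult_left_mono) auto
  also have "\<dots> = 1 - t"
    using \<open>t > 0\<close> by (simp add: field_simps)
  finally show ?thesis
    using False by (simp add: xlogx_def)
qed (simp add: xlogx_def)

lemma objP_le_bound:
  assumes "\<delta> \<ge> 0" and "feasibleP d l x y"
  shows "objP d l \<delta> \<omega> x y \<le> (\<Sum>j<d*l. \<Sum>k<l. \<bar>\<omega> j k\<bar>) + \<delta> * (2 * real (d * l * l))"
proof -
  have bounds: "0 \<le> x j k \<and> x j k \<le> 1 \<and> 0 \<le> y j k \<and> y j k \<le> 1" if "j < d*l" "k < l" for j k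
    using assms(2) that unfolding feasibleP_def by blast
  have linear: "(\<Sum>j<d*l. \<Sum>k<l. x j k * \<omega> j k) \<le> (\<Sum>j<d*l. \<Sum>k<l. \<bar>\<omega> j k\<bar>)"
  proof (intro sum_mono)
    fix j k assume "j \<in> {..<d*l}" "k \<in> {..<l}"
    then have "\<bar>x j k\<bar> \<le> 1" using bounds by auto
    then have "\<bar>x j k * \<omega> j k\<bar> \<le> \<bar>\<omega> j k\<bar>"
      by (simp add: abs_mult mult_left_le_one_le)
    then show "x j k * \<omega> j k \<le> \<bar>\<omega> j k\<bar>" by linarith
  qed
  have "(\<Sum>j<d*l. \<Sum>k<l. - 2 :: real) \<le> (\<Sum>j<d*l. \<Sum>k<l. xlogx (x j k) + xlogx (y j k))"
  proof (intro sum_mono)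
    fix j k assume "j \<in> {..<d*l}" "k \<in> {..<l}"
    then have "0 \<le> x j k" "x j k \<le> 1" "0 \<le> y j k" "y j k \<le> 1" using bounds by auto
    then show "- 2 \<le> xlogx (x j k) + xlogx (y j k)"
      using diff_one_le_xlogx[of "x j k"] diff_one_le_xlogx[of "y j k"] by linarith
  qed
  then have "- (2 * real (d * l * l)) \<le> (\<Sum>j<d*l. \<Sum>k<l. xlogx (x j k) + xlogx (y j k))"
    by simp
  then have "- \<delta> * (\<Sum>j<d*l. \<Sum>k<l. xlogx (x j k) + xlogx (y j k)) \<le> \<delta> * (2 * real (d * l * l))"
    using mult_left_mono[OF _ assms(1)] by force
  with linear show ?thesis unfolding objP_def by linarith
qed

lemma objP_le_opt_val_P:
  assumes "\<delta> \<ge> 0" and "feasibleP d l x y"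
  shows "objP d l \<delta> \<omega> x y \<le> opt_val_P d l \<delta> \<omega>"
proof -
  have "bdd_above ((\<lambda>xy. objP d l \<delta> \<omega> (fst xy) (snd xy)) ` {(x, y). feasibleP d l x y})"
    using objP_le_bound[OF assms(1)] by (intro bdd_aboveI) auto
  then show ?thesis
    unfolding opt_val_P_def using assms(2) by (auto intro: cSUP_upper2[where x = "(x, y)"])
qed

lemma objP_ge_linear_part:
  assumes "\<delta> \<ge> 0" and "feasibleP d l x y"
  shows "(\<Sum>j<d*l. \<Sum>k<l. x j k * \<omega> j k) \<le> objP d l \<delta> \<omega> x y"
proof -
  have "(\<Sum>j<d*l. \<Sum>k<l. xlogx (x j k) + xlogx (y j k)) \<le> 0"
    using assms(2) by (intro sum_nonpos add_nonpos_nonpos xlogx_nonpos) (auto simp: feasibleP_def)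
  then show ?thesis
    unfolding objP_def using assms(1) by (simp add: mult_nonneg_nonpos)
qed

lemma sum_product_div_total:
  fixes a :: "'a \<Rightarrow> real" and b :: "'b \<Rightarrow> real"
  assumes "finite J" and "\<forall>i\<in>J. 0 \<le> a i" and "j \<in> J" and "sum b K = sum a J"
  shows "(\<Sum>k\<in>K. a j * b k / sum a J) = a j"
proof (cases "sum a J = 0")
  case True
  then have "a j = 0" using assms(1-3) by (simp add: sum_nonneg_eq_0_iff)
  then show ?thesis by simp
next
  case False
  then show ?thesis
    using assms(4) by (simp add: sum_divide_distrib[symmetric] sum_distrib_left[symmetric])
qed

lemma product_div_total_in_unit_interval:
  fixes a :: "'a \<Rightarrow> real" and b :: "'b \<Rightarrow> real"
  assumes "finite K" and "\<forall>i\<in>K. 0 \<le> b i" and "k \<in> K" and "sum b K = N"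
    and "0 \<le> a j" and "a j \<le> 1"
  shows "0 \<le> a j * b k / N \<and> a j * b k / N \<le> 1"
proof -
  have "b k \<le> N" using member_le_sum[OF assms(3)] assms(1,2,4) by blast
  moreover have "0 \<le> b k" using assms(2,3) by blast
  ultimately have "0 \<le> b k / N" and "b k / N \<le> 1"
    by (auto simp: divide_le_eq_1)
  then show ?thesis
    using assms(5,6) mult_le_one[of "a j" "b k / N"] mult_nonneg_nonneg[of "a j" "b k / N"] by simp
qed

definition edge_indicator :: "(nat \<times> nat) set \<Rightarrow> nat \<Rightarrow> nat \<Rightarrow> real" where
  "edge_indicator M j k = of_bool ((j, k) \<in> M)"

lemma sum_of_bool_le_card:
  assumes "finite A" and "finite {i. P i}"
  shows "(\<Sum>i\<in>A. of_bool (P i) :: real) \<le> real (card {i. P i})"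
proof -
  have "(\<Sum>i\<in>A. of_bool (P i) :: real) = real (card (A \<inter> {i. P i}))"
    using assms(1) by (simp add: sum_of_bool_eq Int_def)
  also have "\<dots> \<le> real (card {i. P i})"
    using assms by (simp add: card_mono)
  finally show ?thesis .
qed

lemma d_to_1_matching_finite_slices:
  assumes "d_to_1_matching d l M"
  shows "finite {k. (j, k) \<in> M}" and "finite {j. (j, k) \<in> M}"
  using assms unfolding d_to_1_matching_def
  by (auto intro: finite_subset[of _ "{..<l}"] finite_subset[of _ "{..<d*l}"])

lemma edge_indicator_row_sum_le:
  assumes "d_to_1_matching d l M"
  shows "(\<Sum>k<l. edge_indicator M j k) \<le> 1"
proof -
  have "(\<Sum>k<l. edge_indicator M j k) \<le> real (card {k. (j, k) \<in> M})"
    unfolding edge_indicator_def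
    by (rule sum_of_bool_le_card) (simp_all add: d_to_1_matching_finite_slices[OF assms])
  also have "\<dots> \<le> 1"
    using assms by (simp add: d_to_1_matching_def)
  finally show ?thesis .
qed

lemma edge_indicator_col_sum_le:
  assumes "d_to_1_matching d l M"
  shows "(\<Sum>j<d*l. edge_indicator M j k) \<le> real d"
proof -
  have "(\<Sum>j<d*l. edge_indicator M j k) \<le> real (card {j. (j, k) \<in> M})"
    unfolding edge_indicator_def
    by (rule sum_of_bool_le_card) (simp_all add: d_to_1_matching_finite_slices[OF assms])
  also have "\<dots> \<le> real d"
    using assms by (simp add: d_to_1_matching_def)
  finally show ?thesis .
qed

lemma weighted_sum_edge_indicator:
  assumes "M \<subseteq> {..<d*l} \<times> {..<l}"
  shows "(\<Sum>j<d*l. \<Sum>k<l. edge_indicator M j k * \<omega> j k) = matching_weight \<omega> M"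
proof -
  have "(\<Sum>j<d*l. \<Sum>k<l. edge_indicator M j k * \<omega> j k)
      = (\<Sum>(j, k)\<in>{..<d*l} \<times> {..<l}. edge_indicator M j k * \<omega> j k)"
    by (rule sum.cartesian_product)
  also have "\<dots> = (\<Sum>(j, k)\<in>M. edge_indicator M j k * \<omega> j k)"
    using assms by (intro sum.mono_neutral_right) (auto simp: edge_indicator_def)
  also have "\<dots> = matching_weight \<omega> M"
    unfolding matching_weight_def by (rule sum.cong) (auto simp: edge_indicator_def)
  finally show ?thesis .
qed

lemma d_to_1_matching_extends_to_feasible:
  assumes "d_to_1_matching d l M"
  obtains y where "feasibleP d l (edge_indicator M) y"
proof -
  define a where "a j = 1 - (\<Sum>k<l. edge_indicator M j k)" for j
  define b where "b k = real d - (\<Sum>j<d*l. edge_indicator M j k)" for k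
  define N where "N = sum a {..<d*l}"
  have a_nonneg: "\<forall>j\<in>{..<d*l}. 0 \<le> a j"
    using edge_indicator_row_sum_le[OF assms] by (simp add: a_def)
  have a_le: "a j \<le> 1" for j
    unfolding a_def edge_indicator_def by (simp add: sum_nonneg)
  have b_nonneg: "\<forall>k\<in>{..<l}. 0 \<le> b k"
    using edge_indicator_col_sum_le[OF assms] by (simp add: b_def)
  have "(\<Sum>k<l. \<Sum>j<d*l. edge_indicator M j k) = (\<Sum>j<d*l. \<Sum>k<l. edge_indicator M j k)"
    by (rule sum.swap)
  then have sum_b: "sum b {..<l} = N"
    by (simp add: a_def b_def N_def sum_subtractf)
  have row: "(\<Sum>k<l. a j * b k / N) = a j" if "j < d*l" for j
    unfolding N_def by (rule sum_product_div_total) (use a_nonneg sum_b that in \<open>auto simp: N_def\<close>)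
  have col: "(\<Sum>j<d*l. a j * b k / N) = b k" if "k < l" for k
  proof -
    have "(\<Sum>j<d*l. b k * a j / sum b {..<l}) = b k"
      by (rule sum_product_div_total) (use b_nonneg sum_b that in \<open>auto simp: N_def\<close>)
    then show ?thesis by (simp add: sum_b mult.commute)
  qed
  have "feasibleP d l (edge_indicator M) (\<lambda>j k. a j * b k / N)"
    unfolding feasibleP_def
  proof (intro conjI allI impI)
    fix k assume "k < l"
    then show "(\<Sum>j<d*l. edge_indicator M j k + a j * b k / N) \<le> real d"
      by (simp add: sum.distrib col) (simp add: b_def)
  next
    fix j assume "j < d*l"
    then show "(\<Sum>k<l. edge_indicator M j k + a j * b k / N) = 1"
      by (simp add: sum.distrib row) (simp add: a_def)
  next
    fix j k assume "j < d*l" "k < l"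
    then have "0 \<le> a j * b k / N \<and> a j * b k / N \<le> 1"
      using b_nonneg sum_b a_nonneg a_le by (intro product_div_total_in_unit_interval[of "{..<l}" b]) auto
    then show "0 \<le> edge_indicator M j k" "edge_indicator M j k \<le> 1"
      and "0 \<le> a j * b k / N" "a j * b k / N \<le> 1"
      by (auto simp: edge_indicator_def)
  qed
  then show ?thesis by (rule that)
qed

lemma max_matching_weight_attained:
  obtains M where "d_to_1_matching d l M" and "max_matching_weight d l \<omega> = matching_weight \<omega> M"
proof -
  have "finite {M. d_to_1_matching d l M}"
    by (rule finite_subset[of _ "Pow ({..<d*l} \<times> {..<l})"]) (auto simp: d_to_1_matching_def)
  moreover have "d_to_1_matching d l {}" by (simp add: d_to_1_matching_def)
  ultimately have "max_matching_weight d l \<omega> \<in> matching_weight \<omega> ` {M. d_to_1_matching d l M}"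
    unfolding max_matching_weight_def by (intro Max_in) auto
  then show ?thesis using that by blast
qed

theorem mainTheorem9:
  fixes d l :: nat and \<delta> :: real and \<omega> :: "nat \<Rightarrow> nat \<Rightarrow> real"
  assumes "\<delta> \<ge> 0"
  shows "opt_val_P d l \<delta> \<omega> \<ge> max_matching_weight d l \<omega>"
proof -
  obtain M where M: "d_to_1_matching d l M" and max: "max_matching_weight d l \<omega> = matching_weight \<omega> M"
    by (rule max_matching_weight_attained)
  obtain y where feasible: "feasibleP d l (edge_indicator M) y"
    using d_to_1_matching_extends_to_feasible[OF M] .
  have "matching_weight \<omega> M = (\<Sum>j<d*l. \<Sum>k<l. edge_indicator M j k * \<omega> j k)"
    using M by (simp add: weighted_sum_edge_indicator d_to_1_matching_def)
  also have "\<dots> \<le> objP d l \<delta> \<omega> (edge_indicator M) y"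
    by (rule objP_ge_linear_part[OF assms feasible])
  also have "\<dots> \<le> opt_val_P d l \<delta> \<omega>"
    by (rule objP_le_opt_val_P[OF assms feasible])
  finally show ?thesis using max by simp
qed

end
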